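(* Let $H$ be a Hilbert space and $L:H\to[0,\infty)$ be $C^2$. Let $c:[0,\infty)\to[0,\infty)$ be nonincreasing with $$c(r)\le\inf\Big\{\frac{|\nabla L(x)|}{\sqrt{L(x)}}:\ |x|\le r\Big\}\quad\text{for all }r\ge0$$ (with the convention $0/0=\infty$), and let $C(z)=\int_0^zc(v)\,dv$. If $(x_t)_{t\ge0}$ solves $\dot x(t)=-\nabla L(x(t))$, $x(0)=x_0$, then for all $t\ge0$, $$C\Big(|x_0|+\int_0^t|\dot x_s|\,ds\Big)+2\sqrt{L(x_t)}\le C(|x_0|)+2\sqrt{L(x_0)}.$$ In particular, if for some $R>0$ one has $C(R)>C(|x_0|)+2\sqrt{L(x_0)}$, then there is $x_\infty\in H$ with $|x_\infty|<R$, $L(x_\infty)=0$ and $x(t)\to x_\infty$; more precisely, for all $t\ge0$, $L(x(t))\le L(x_0)e^{-c(R)^2t}$ and $|x(t)-x_\infty|\le\frac{2\sqrt{L(x_0)}}{c(R)}e^{-c(R)^2t/2}$. *)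

theory Defs
  imports "HOL-Analysis.Analysis"
begin

end

theory Submission
  imports Defs "HOL-Real_Asymp.Real_Asymp"
begin

(* Along the flow, L (x t) decreases with derivative -|x'|^2.  The bound c(r) sqrt L <= |grad L|
   on the ball of radius r turns this into  d/dt 2 sqrt (L (x t)) <= - c(r t) |x'|,  where
   r t = |x0| + (arc length up to t) dominates |x t|.  As c is nonincreasing, C (r t) grows at
   most at rate c(r t) |x'|, so C (r t) + 2 sqrt (L (x t)) is nonincreasing.  Since sqrt L need
   not be differentiable where L vanishes, monotonicity is derived from one-sided Dini
   derivatives.  If C R exceeds the initial value, r t stays below R with a uniform gap, so the
   rate is bounded below along the whole trajectory: L decays exponentially, the remaining arc
   length after time t is at most 2 sqrt (L (x t)) / rate, and x converges. *)

lemma right_Dini_le_imp_increment_le: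
  fixes f :: "real \<Rightarrow> real"
  assumes ab: "a \<le> b" and cont: "continuous_on {a..b} f" and "0 < e"
    and Dini: "\<And>t. t \<in> {a..<b} \<Longrightarrow> eventually (\<lambda>u. f u \<le> f t + e * (u - t)) (at_right t)"
  shows "f b \<le> f a + e * (b - a)"
proof -
  define P where "P s \<longleftrightarrow> f s \<le> f a + e * (s - a)" for s
  define S where "S = {t \<in> {a..b}. \<forall>s\<in>{a..t}. P s}"
  define m where "m = Sup S"
  have "a \<in> S" using ab by (simp add: S_def P_def)
  have bdd: "bdd_above S" by (auto simp: S_def bdd_above_def)
  have "a \<le> m" unfolding m_def using \<open>a \<in> S\<close> bdd by (rule cSup_upper)
  moreover have "m \<le> b" unfolding m_def using \<open>a \<in> S\<close> by (intro cSup_least) (auto simp: S_def)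
  ultimately have m: "a \<le> m" "m \<le> b" .
  have below_m: "P s" if "s \<in> {a..<m}" for s
  proof -
    have "s < Sup S" using that by (simp add: m_def)
    then obtain t where "t \<in> S" "s < t" using less_cSup_iff[OF _ bdd] \<open>a \<in> S\<close> by blast
    then show ?thesis using that by (auto simp: S_def)
  qed
  have "P m"
  proof (cases "a = m")
    case False
    have "closed {s \<in> {a..b}. P s}"
      unfolding P_def by (intro continuous_on_closed_Collect_le cont continuous_intros)
    moreover have "{a..<m} \<subseteq> {s \<in> {a..b}. P s}" using below_m m by auto
    ultimately have "closure {a..<m} \<subseteq> {s \<in> {a..b}. P s}" by (rule closure_minimal[rotated])
    moreover have "m \<in> closure {a..<m}" using False m by simp
    ultimately show ?thesis by blast
  qed (simp add: P_def)
  then have "m \<in> S" using below_m m by (auto simp: S_def le_less)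
  have "m = b"
  proof (rule ccontr)
    assume "m \<noteq> b"
    then obtain d where "m < d" and near: "\<And>u. m < u \<Longrightarrow> u < d \<Longrightarrow> f u \<le> f m + e * (u - m)"
      using Dini[of m] m by (auto simp: eventually_at_right_field)
    define t where "t = min ((m + d) / 2) b"
    have "m < t" using \<open>m < d\<close> \<open>m \<noteq> b\<close> m by (auto simp: t_def)
    have "P s" if "s \<in> {m<..t}" for s
      using near[of s] that \<open>P m\<close> \<open>m < d\<close> by (auto simp: P_def t_def algebra_simps)
    then have "t \<in> S" using \<open>m \<in> S\<close> \<open>m < t\<close> m by (force simp: S_def t_def)
    then have "t \<le> m" unfolding m_def using bdd by (rule cSup_upper)
    then show False using \<open>m < t\<close> by simp
  qed
  then show ?thesis using \<open>P m\<close> by (simp add: P_def)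
qed

lemma right_Dini_nonpos_imp_decreasing:
  fixes f :: "real \<Rightarrow> real"
  assumes ab: "a \<le> b" and cont: "continuous_on {a..b} f"
    and Dini: "\<And>t e. t \<in> {a..<b} \<Longrightarrow> 0 < e \<Longrightarrow>
                 eventually (\<lambda>u. f u \<le> f t + e * (u - t)) (at_right t)"
  shows "f b \<le> f a"
proof (rule field_le_epsilon)
  fix e :: real assume "0 < e"
  then have "f b \<le> f a + e / (b - a + 1) * (b - a)"
    using ab by (intro right_Dini_le_imp_increment_le cont Dini) simp_all
  also have "\<dots> \<le> f a + e" using \<open>0 < e\<close> ab by (simp add: field_simps)
  finally show "f b \<le> f a + e" .
qed

lemma right_derivative_nonpos_imp_eventually_le:
  fixes f :: "real \<Rightarrow> real"
  assumes "(f has_real_derivative D) (at_right t)" "D \<le> 0" "0 < e"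
  shows "eventually (\<lambda>u. f u \<le> f t + e * (u - t)) (at_right t)"
proof -
  have "((\<lambda>u. (f u - f t) / (u - t)) \<longlongrightarrow> D) (at_right t)"
    using assms(1) by (simp add: has_field_derivative_iff)
  from order_tendstoD(2)[OF this, of e]
  have "eventually (\<lambda>u. (f u - f t) / (u - t) < e) (at_right t)"
    using assms(2,3) by simp
  then show ?thesis
    using eventually_at_right_less[of t] by eventually_elim (simp add: pos_divide_less_eq)
qed

lemma right_derivative_nonpos_imp_decreasing:
  fixes f f' :: "real \<Rightarrow> real"
  assumes "a \<le> b" "continuous_on {a..b} f"
    and "\<And>t. t \<in> {a..<b} \<Longrightarrow> (f has_real_derivative f' t) (at_right t)"
    and "\<And>t. t \<in> {a..<b} \<Longrightarrow> f' t \<le> 0"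
  shows "f b \<le> f a"
  using assms(1,2) by (rule right_Dini_nonpos_imp_decreasing)
    (use assms(3,4) right_derivative_nonpos_imp_eventually_le in blast)

lemma at_within_atLeast_eq_Icc:
  fixes a t :: real
  assumes "a \<le> t" "t < b"
  shows "at t within {a..b} = at t within {a..}"
  by (rule at_within_nhd[of _ "{..<b}"]) (use assms in auto)

lemma indefinite_integral_continuous_atLeast:
  fixes g :: "real \<Rightarrow> 'a::banach"
  assumes "\<And>b. g integrable_on {a..b}"
  shows "continuous_on {a..} (\<lambda>u. integral {a..u} g)"
  unfolding continuous_on_eq_continuous_within
proof
  fix t assume "t \<in> {a..}"
  then have "continuous (at t within {a..t+1}) (\<lambda>u. integral {a..u} g)"
    using indefinite_integral_continuous_1[OF assms] by (simp add: continuous_on_eq_continuous_within)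
  then show "continuous (at t within {a..}) (\<lambda>u. integral {a..u} g)"
    using at_within_atLeast_eq_Icc[of a t "t+1"] \<open>t \<in> {a..}\<close> by simp
qed

lemma integral_has_real_derivative_atLeast:
  assumes "continuous_on {a..} g" "a \<le> t"
  shows "((\<lambda>u. integral {a..u} g) has_real_derivative g t) (at t within {a..})"
proof -
  have "((\<lambda>u. integral {a..u} g) has_real_derivative g t) (at t within {a..t+1})"
    by (rule integral_has_real_derivative) (use assms in \<open>auto intro: continuous_on_subset\<close>)
  then show ?thesis using at_within_atLeast_eq_Icc[of a t "t+1"] assms(2) by simp
qed

lemma tendsto_at_top_of_tail_bound:
  fixes x :: "real \<Rightarrow> 'a::complete_space"
  assumes B: "(B \<longlongrightarrow> 0) at_top"
    and tail: "\<forall>\<^sub>F t in at_top. \<forall>T\<ge>t. dist (x T) (x t) \<le> B t"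
  shows "\<exists>l. (x \<longlongrightarrow> l) at_top"
proof -
  have "cauchy_filter (filtermap x at_top)"
    unfolding cauchy_filter_metric_filtermap
  proof (intro allI impI)
    fix e :: real assume "0 < e"
    have "\<forall>\<^sub>F t in at_top. B t < e / 2 \<and> (\<forall>T\<ge>t. dist (x T) (x t) \<le> B t)"
      using order_tendstoD(2)[OF B, of "e / 2"] tail \<open>0 < e\<close> by (auto intro: eventually_conj)
    then obtain N where N: "B N < e / 2" "\<And>T. N \<le> T \<Longrightarrow> dist (x T) (x N) \<le> B N"
      by (auto simp: eventually_at_top_linorder)
    have "dist (x s) (x t) < e" if "N \<le> s" "N \<le> t" for s t
      using dist_triangle2[of "x s" "x t" "x N"] N(1) N(2)[OF that(1)] N(2)[OF that(2)] by simp
    then show "\<exists>P. eventually P at_top \<and> (\<forall>s t. P s \<and> P t \<longrightarrow> dist (x s) (x t) < e)"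
      by (intro exI[of _ "\<lambda>t. N \<le> t"]) (auto intro: eventually_ge_at_top)
  qed
  then obtain l where "filtermap x at_top \<le> nhds l"
    using cauchy_filter_complete_converges[OF _ complete_UNIV] by (force simp: filtermap_bot_iff)
  then show ?thesis unfolding filterlim_def by blast
qed

lemma gradient_eq_0_at_zero:
  fixes L :: "'a::real_inner \<Rightarrow> real"
  assumes "\<And>z. 0 \<le> L z" "(L has_derivative (\<lambda>h. inner g h)) (at y)" "L y = 0"
  shows "g = 0"
proof -
  have "(\<lambda>h. inner g h) = (\<lambda>h. 0)"
    using assms by (intro has_derivative_local_min[of L _ y]) auto
  then show ?thesis by (metis inner_eq_zero_iff)
qed

lemma norm_diff_le_integral:
  fixes f f' :: "real \<Rightarrow> 'a::real_inner"
  assumes "a \<le> b"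
    and f': "\<And>u. u \<in> {a..b} \<Longrightarrow> (f has_vector_derivative f' u) (at u within {a..b})"
    and g: "g integrable_on {a..b}" "\<And>u. u \<in> {a..b} \<Longrightarrow> norm (f' u) \<le> g u"
  shows "norm (f b - f a) \<le> integral {a..b} g"
proof -
  define v where "v = f b - f a"
  have "((\<lambda>u. inner v (f' u)) has_integral (inner v (f b) - inner v (f a))) {a..b}"
    using assms(1) by (intro fundamental_theorem_of_calculus
        bounded_linear.has_vector_derivative[OF bounded_linear_inner_right f'])
  moreover have "((\<lambda>u. norm v * g u) has_integral (norm v * integral {a..b} g)) {a..b}"
    using g(1) by (intro has_integral_mult_right integrable_integral)
  moreover have "inner v (f' u) \<le> norm v * g u" if "u \<in> {a..b}" for u
    using norm_cauchy_schwarz[of v "f' u"] mult_left_mono[OF g(2)[OF that] norm_ge_zero[of v]]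
    by linarith
  ultimately have "inner v (f b) - inner v (f a) \<le> norm v * integral {a..b} g"
    by (rule has_integral_le)
  moreover have "inner v (f b) - inner v (f a) = norm v * norm v"
    by (simp add: v_def flip: inner_diff_right power2_norm_eq_inner power2_eq_square)
  ultimately have "norm v * norm v \<le> norm v * integral {a..b} g" by simp
  moreover have "0 \<le> integral {a..b} g"
    using g by (intro integral_nonneg) (auto intro: order_trans[OF norm_ge_zero])
  ultimately show ?thesis unfolding v_def by (cases "v = 0") (auto simp: v_def)
qed

locale gradient_flow =
  fixes L :: "'a::{real_inner, complete_space} \<Rightarrow> real" and G :: "'a \<Rightarrow> 'a" and x :: "real \<Rightarrow> 'a"
  assumes L_nonneg: "\<And>y. 0 \<le> L y"
    and L_grad: "\<And>y. (L has_derivative (\<lambda>h. inner (G y) h)) (at y)"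
    and G_cont: "continuous_on UNIV G"
    and ode: "\<And>t. 0 \<le> t \<Longrightarrow> (x has_vector_derivative - G (x t)) (at t within {0..})"
begin

definition speed :: "real \<Rightarrow> real" where "speed t = norm (G (x t))"

definition arclength :: "real \<Rightarrow> real" where "arclength t = integral {0..t} speed"

lemma L_continuous: "continuous_on UNIV L"
  by (intro continuous_at_imp_continuous_on ballI has_derivative_continuous[OF L_grad])

lemma x_continuous: "continuous_on {0..} x"
  unfolding continuous_on_eq_continuous_within
  using has_vector_derivative_continuous[OF ode] by simp

lemma energy_continuous: "continuous_on {0..} (\<lambda>t. L (x t))"
  by (rule continuous_on_compose2[OF L_continuous x_continuous]) auto

lemma speed_continuous: "continuous_on {0..} speed"
  unfolding speed_def by (intro continuous_on_norm continuous_on_compose2[OF G_cont x_continuous]) auto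

lemma speed_integrable: "0 \<le> a \<Longrightarrow> speed integrable_on {a..b}"
  by (intro integrable_continuous_real continuous_on_subset[OF speed_continuous]) auto

lemma arclength_split: "0 \<le> s \<Longrightarrow> s \<le> t \<Longrightarrow> arclength t = arclength s + integral {s..t} speed"
  unfolding arclength_def using Henstock_Kurzweil_Integration.integral_combine[OF _ _ speed_integrable, of 0 s t] by simp

lemma arclength_mono: "0 \<le> s \<Longrightarrow> s \<le> t \<Longrightarrow> arclength s \<le> arclength t"
  using arclength_split[of s t] integral_nonneg[OF speed_integrable, of s t] by (simp add: speed_def)

lemma arclength_nonneg: "0 \<le> t \<Longrightarrow> 0 \<le> arclength t"
  using arclength_mono[of 0 t] by (simp add: arclength_def)

lemma arclength_continuous: "continuous_on {0..} arclength"
  unfolding arclength_def[abs_def] by (intro indefinite_integral_continuous_atLeast speed_integrable) simp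

lemma arclength_has_derivative: "0 \<le> t \<Longrightarrow> (arclength has_real_derivative speed t) (at t within {0..})"
  unfolding arclength_def[abs_def] by (rule integral_has_real_derivative_atLeast[OF speed_continuous])

lemma energy_has_derivative:
  assumes "0 \<le> t"
  shows "((\<lambda>t. L (x t)) has_real_derivative - (speed t)\<^sup>2) (at t within {0..})"
proof -
  have "((\<lambda>t. L (x t)) has_derivative (\<lambda>h. inner (G (x t)) (h *\<^sub>R - G (x t)))) (at t within {0..})"
    using has_derivative_compose[OF ode[OF assms, unfolded has_vector_derivative_def]
        has_derivative_at_withinI[OF L_grad]] .
  moreover have "(\<lambda>h. inner (G (x t)) (h *\<^sub>R - G (x t))) = (*) (- (speed t)\<^sup>2)"
    by (auto simp: fun_eq_iff speed_def power2_norm_eq_inner)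
  ultimately show ?thesis by (simp add: has_field_derivative_def)
qed

lemma energy_antimono: "0 \<le> s \<Longrightarrow> s \<le> t \<Longrightarrow> L (x t) \<le> L (x s)"
  by (rule right_derivative_nonpos_imp_decreasing[where f' = "\<lambda>u. - (speed u)\<^sup>2"])
    (auto intro: continuous_on_subset[OF energy_continuous]
      has_field_derivative_subset[OF energy_has_derivative])

lemma vector_derivative_eq: "0 \<le> t \<Longrightarrow> vector_derivative x (at t within {0..}) = - G (x t)"
proof (rule vector_derivative_within[OF _ ode])
  assume "0 \<le> t"
  have "at_right t \<le> at t within {0..}" using \<open>0 \<le> t\<close> by (intro at_le) auto
  then show "at t within {0..} \<noteq> bot" using trivial_limit_at_right_real[of t] by (metis bot.extremum_uniqueI)
qed

lemma arclength_eq_integral_norm_vector_derivative: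
  "arclength t = integral {0..t} (\<lambda>s. norm (vector_derivative x (at s within {0..})))"
  unfolding arclength_def by (rule integral_cong) (simp add: vector_derivative_eq speed_def)

lemma displacement_le_arclength:
  assumes "0 \<le> s" "s \<le> t"
  shows "norm (x t - x s) \<le> arclength t - arclength s"
proof -
  have "norm (x t - x s) \<le> integral {s..t} speed"
    using assms speed_integrable[of s t]
    by (intro norm_diff_le_integral[where f' = "\<lambda>u. - G (x u)" and g = speed])
      (auto intro: has_vector_derivative_within_subset[OF ode] simp: speed_def)
  then show ?thesis using arclength_split[OF assms] by simp
qed

lemma energy_eq_0_after:
  assumes "0 \<le> t" "L (x t) = 0" "t \<le> u"
  shows "L (x u) = 0" and "arclength u = arclength t"
proof -
  have L0: "L (x v) = 0" if "t \<le> v" for v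
    using energy_antimono[OF assms(1) that] assms(2) L_nonneg[of "x v"] by simp
  then show "L (x u) = 0" using assms(3) .
  have "speed v = 0" if "v \<in> {t..u}" for v
    using gradient_eq_0_at_zero[OF L_nonneg L_grad L0] that by (simp add: speed_def)
  then have "integral {t..u} speed = integral {t..u} (\<lambda>_. 0)" by (rule integral_cong)
  then show "arclength u = arclength t" using arclength_split[OF assms(1,3)] by simp
qed

lemma lyapunov_right_Dini:
  assumes "0 \<le> t" "0 \<le> a" and rate: "a * sqrt (L (x t)) \<le> speed t" and "0 < e"
  shows "\<forall>\<^sub>F u in at_right t. a * arclength u + 2 * sqrt (L (x u))
            \<le> a * arclength t + 2 * sqrt (L (x t)) + e * (u - t)"
proof (cases "L (x t) = 0")
  case True
  show ?thesis
    using eventually_at_right_less[of t]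
  proof eventually_elim
    case (elim u)
    then show ?case using energy_eq_0_after[OF assms(1) True, of u] True \<open>0 < e\<close> by simp
  qed
next
  case False
  then have pos: "0 < L (x t)" using L_nonneg[of "x t"] by linarith
  have sub: "{t<..} \<subseteq> {0..}" using assms(1) by auto
  define D where "D = a * speed t + 2 * (inverse (sqrt (L (x t))) / 2 * - (speed t)\<^sup>2)"
  have "((\<lambda>u. sqrt (L (x u))) has_real_derivative inverse (sqrt (L (x t))) / 2 * - (speed t)\<^sup>2)
          (at_right t)"
    by (rule DERIV_chain2[OF DERIV_real_sqrt[OF pos]
          has_field_derivative_subset[OF energy_has_derivative[OF assms(1)] sub]])
  then have "((\<lambda>u. a * arclength u + 2 * sqrt (L (x u))) has_real_derivative D) (at_right t)"
    unfolding D_def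
    by (intro DERIV_add DERIV_cmult has_field_derivative_subset[OF arclength_has_derivative[OF assms(1)] sub])
  moreover have "D \<le> 0"
  proof -
    have "a * sqrt (L (x t)) * speed t \<le> speed t * speed t"
      using mult_right_mono[OF rate] by (simp add: speed_def)
    then show ?thesis using pos by (simp add: D_def field_simps power2_eq_square)
  qed
  ultimately show ?thesis using \<open>0 < e\<close> by (rule right_derivative_nonpos_imp_eventually_le)
qed

lemma lyapunov_decreasing:
  fixes \<Phi> \<phi> :: "real \<Rightarrow> real"
  assumes \<Phi>_cont: "continuous_on {r\<^sub>0..} \<Phi>"
    and \<Phi>_slope: "\<And>a b. r\<^sub>0 \<le> a \<Longrightarrow> a \<le> b \<Longrightarrow> \<Phi> b - \<Phi> a \<le> \<phi> a * (b - a)"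
    and \<phi>_nonneg: "\<And>a. r\<^sub>0 \<le> a \<Longrightarrow> 0 \<le> \<phi> a"
    and rate: "\<And>t. 0 \<le> t \<Longrightarrow> \<phi> (r\<^sub>0 + arclength t) * sqrt (L (x t)) \<le> speed t"
    and st: "0 \<le> s" "s \<le> t"
  shows "\<Phi> (r\<^sub>0 + arclength t) + 2 * sqrt (L (x t)) \<le> \<Phi> (r\<^sub>0 + arclength s) + 2 * sqrt (L (x s))"
proof (rule right_Dini_nonpos_imp_decreasing[OF st(2)])
  have "continuous_on {s..t} (\<lambda>u. r\<^sub>0 + arclength u)"
    using st by (intro continuous_intros continuous_on_subset[OF arclength_continuous]) auto
  then have "continuous_on {s..t} (\<lambda>u. \<Phi> (r\<^sub>0 + arclength u))"
    by (rule continuous_on_compose2[OF \<Phi>_cont]) (use st in \<open>auto intro!: arclength_nonneg\<close>)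
  moreover have "continuous_on {s..t} (\<lambda>u. sqrt (L (x u)))"
    using st by (intro continuous_on_compose2[OF continuous_on_real_sqrt
          continuous_on_subset[OF energy_continuous]]) auto
  ultimately show "continuous_on {s..t} (\<lambda>u. \<Phi> (r\<^sub>0 + arclength u) + 2 * sqrt (L (x u)))"
    by (intro continuous_on_add continuous_on_mult continuous_on_const)
next
  fix u e :: real assume "u \<in> {s..<t}" "0 < e"
  then have "0 \<le> u" using st by simp
  define a where "a = \<phi> (r\<^sub>0 + arclength u)"
  have "0 \<le> a" unfolding a_def using \<phi>_nonneg arclength_nonneg[OF \<open>0 \<le> u\<close>] by simp
  show "\<forall>\<^sub>F v in at_right u. \<Phi> (r\<^sub>0 + arclength v) + 2 * sqrt (L (x v))
          \<le> \<Phi> (r\<^sub>0 + arclength u) + 2 * sqrt (L (x u)) + e * (v - u)"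
    using lyapunov_right_Dini[OF \<open>0 \<le> u\<close> \<open>0 \<le> a\<close> rate[OF \<open>0 \<le> u\<close>, folded a_def] \<open>0 < e\<close>]
      eventually_at_right_less[of u]
  proof eventually_elim
    case (elim v)
    have "\<Phi> (r\<^sub>0 + arclength v) - \<Phi> (r\<^sub>0 + arclength u) \<le> a * (arclength v - arclength u)"
      using \<Phi>_slope[of "r\<^sub>0 + arclength u" "r\<^sub>0 + arclength v"] arclength_nonneg[OF \<open>0 \<le> u\<close>]
        arclength_mono[OF \<open>0 \<le> u\<close>, of v] elim(2) by (simp add: a_def)
    then show ?case using elim(1) by (simp add: algebra_simps)
  qed
qed

lemma energy_decay:
  assumes "0 \<le> k" and rate: "\<And>u. 0 \<le> u \<Longrightarrow> k * sqrt (L (x u)) \<le> speed u" and "0 \<le> t"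
  shows "L (x t) \<le> L (x 0) * exp (- k\<^sup>2 * t)"
proof -
  have "exp (k\<^sup>2 * t) * L (x t) \<le> exp (k\<^sup>2 * 0) * L (x 0)"
  proof (rule right_derivative_nonpos_imp_decreasing[OF \<open>0 \<le> t\<close>,
        where f' = "\<lambda>u. exp (k\<^sup>2 * u) * (k\<^sup>2 * L (x u) - (speed u)\<^sup>2)"])
    show "continuous_on {0..t} (\<lambda>u. exp (k\<^sup>2 * u) * L (x u))"
      by (intro continuous_intros continuous_on_subset[OF energy_continuous]) auto
  next
    fix u assume u: "u \<in> {0..<t}"
    then have "{u<..} \<subseteq> {0..}" by auto
    have "((\<lambda>u. exp (k\<^sup>2 * u)) has_real_derivative exp (k\<^sup>2 * u) * k\<^sup>2) (at_right u)"
      by (intro derivative_eq_intros) auto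
    from DERIV_mult[OF this has_field_derivative_subset[OF energy_has_derivative \<open>{u<..} \<subseteq> {0..}\<close>]]
    show "((\<lambda>u. exp (k\<^sup>2 * u) * L (x u)) has_real_derivative
            exp (k\<^sup>2 * u) * (k\<^sup>2 * L (x u) - (speed u)\<^sup>2)) (at_right u)"
      using u by (simp add: algebra_simps)
    have "(k * sqrt (L (x u)))\<^sup>2 \<le> (speed u)\<^sup>2"
      using rate[of u] u \<open>0 \<le> k\<close> L_nonneg by (intro power_mono) auto
    then show "exp (k\<^sup>2 * u) * (k\<^sup>2 * L (x u) - (speed u)\<^sup>2) \<le> 0"
      using L_nonneg[of "x u"] by (simp add: power_mult_distrib mult_nonneg_nonpos)
  qed
  then show ?thesis by (simp add: exp_minus field_simps)
qed

lemma sqrt_energy_decay: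
  assumes "0 \<le> k" and rate: "\<And>u. 0 \<le> u \<Longrightarrow> k * sqrt (L (x u)) \<le> speed u" and "0 \<le> t"
  shows "sqrt (L (x t)) \<le> sqrt (L (x 0)) * exp (- k\<^sup>2 * t / 2)"
proof -
  have "sqrt (exp (- k\<^sup>2 * t)) = exp (- k\<^sup>2 * t / 2)"
    by (rule real_sqrt_unique) (simp_all add: power2_eq_square flip: exp_add)
  then show ?thesis using energy_decay[OF assms] by (metis real_sqrt_le_mono real_sqrt_mult)
qed

lemma dist_tail_bound:
  assumes "0 \<le> k" and rate: "\<And>u. 0 \<le> u \<Longrightarrow> k * sqrt (L (x u)) \<le> speed u" and "0 \<le> t" "t \<le> T"
  shows "k * dist (x T) (x t) \<le> 2 * sqrt (L (x 0)) * exp (- k\<^sup>2 * t / 2)"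
proof -
  have "k * (0 + arclength T) + 2 * sqrt (L (x T)) \<le> k * (0 + arclength t) + 2 * sqrt (L (x t))"
    using assms by (intro lyapunov_decreasing[where \<phi> = "\<lambda>_. k"])
      (auto intro: continuous_intros simp: algebra_simps)
  then have "k * arclength T + 2 * sqrt (L (x T)) \<le> k * arclength t + 2 * sqrt (L (x t))"
    by simp
  moreover have "k * dist (x T) (x t) \<le> k * arclength T - k * arclength t"
    using displacement_le_arclength[OF assms(3,4)] \<open>0 \<le> k\<close>
    by (simp add: dist_norm mult_left_mono flip: right_diff_distrib)
  moreover have "0 \<le> sqrt (L (x T))" by (simp add: L_nonneg)
  moreover note sqrt_energy_decay[OF assms(1,2,3)]
  ultimately show ?thesis by linarith
qed

lemma converges_to_minimizer:
  assumes "0 < k" and rate: "\<And>u. 0 \<le> u \<Longrightarrow> k * sqrt (L (x u)) \<le> speed u"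
  obtains l where "(x \<longlongrightarrow> l) at_top" "L l = 0"
proof -
  define B where "B t = 2 * sqrt (L (x 0)) / k * exp (- k\<^sup>2 * t / 2)" for t
  have "(B \<longlongrightarrow> 0) at_top" unfolding B_def using \<open>0 < k\<close> by real_asymp
  moreover have "\<forall>\<^sub>F t in at_top. \<forall>T\<ge>t. dist (x T) (x t) \<le> B t"
    using eventually_ge_at_top[of 0]
  proof eventually_elim
    case (elim t)
    then show ?case using dist_tail_bound[OF less_imp_le[OF \<open>0 < k\<close>] rate elim] \<open>0 < k\<close>
      by (simp add: B_def field_simps)
  qed
  ultimately obtain l where lim: "(x \<longlongrightarrow> l) at_top" using tendsto_at_top_of_tail_bound by blast
  have "((\<lambda>t. L (x t)) \<longlongrightarrow> L l) at_top"
    using continuous_on_tendsto_compose[OF L_continuous lim] by simp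
  moreover have "((\<lambda>t. L (x t)) \<longlongrightarrow> 0) at_top"
  proof (rule tendsto_sandwich[of "\<lambda>_. 0" _ _ "\<lambda>t. L (x 0) * exp (- k\<^sup>2 * t)"])
    show "\<forall>\<^sub>F t in at_top. L (x t) \<le> L (x 0) * exp (- k\<^sup>2 * t)"
      using eventually_ge_at_top[of 0] by eventually_elim (rule energy_decay[OF _ rate], use \<open>0 < k\<close> in auto)
    show "((\<lambda>t. L (x 0) * exp (- k\<^sup>2 * t)) \<longlongrightarrow> 0) at_top" using \<open>0 < k\<close> by real_asymp
  qed (auto simp: L_nonneg)
  ultimately have "L l = 0" by (rule tendsto_unique[OF trivial_limit_at_top_linorder])
  with lim show thesis by (rule that)
qed

lemma dist_limit_bound:
  assumes "0 \<le> k" and rate: "\<And>u. 0 \<le> u \<Longrightarrow> k * sqrt (L (x u)) \<le> speed u"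
    and lim: "(x \<longlongrightarrow> l) at_top" and "0 \<le> t"
  shows "k * dist (x t) l \<le> 2 * sqrt (L (x 0)) * exp (- k\<^sup>2 * t / 2)"
proof -
  have "((\<lambda>T. k * dist (x T) (x t)) \<longlongrightarrow> k * dist l (x t)) at_top"
    by (intro tendsto_intros lim)
  moreover have "\<forall>\<^sub>F T in at_top. k * dist (x T) (x t) \<le> 2 * sqrt (L (x 0)) * exp (- k\<^sup>2 * t / 2)"
    using eventually_ge_at_top[of t] by eventually_elim (rule dist_tail_bound[OF assms(1,2,4)])
  ultimately show ?thesis by (simp add: tendsto_upperbound dist_commute)
qed

end

locale lojasiewicz_flow = gradient_flow +
  fixes c :: "real \<Rightarrow> real"
  assumes c_nonneg: "\<And>r. 0 \<le> r \<Longrightarrow> 0 \<le> c r"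
    and c_antimono: "\<And>r s. 0 \<le> r \<Longrightarrow> r \<le> s \<Longrightarrow> c s \<le> c r"
    and c_bound: "\<And>r y. 0 \<le> r \<Longrightarrow> norm y \<le> r \<Longrightarrow> L y \<noteq> 0 \<Longrightarrow>
                    c r \<le> norm (G y) / sqrt (L y)"
begin

definition C :: "real \<Rightarrow> real" where "C z = integral {0..z} c"

definition radius :: "real \<Rightarrow> real" where "radius t = norm (x 0) + arclength t"

lemma c_integrable: "0 \<le> a \<Longrightarrow> c integrable_on {a..b}"
proof -
  assume "0 \<le> a"
  then have "mono_on {a..b} (\<lambda>r. - c r)" by (intro mono_onI) (simp add: c_antimono)
  then show ?thesis using integrable_neg[OF integrable_on_mono_on] by fastforce
qed

lemma C_split: "0 \<le> a \<Longrightarrow> a \<le> b \<Longrightarrow> C b = C a + integral {a..b} c"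
  unfolding C_def using Henstock_Kurzweil_Integration.integral_combine[OF _ _ c_integrable, of 0 a b] by simp

lemma C_increment_le: "0 \<le> a \<Longrightarrow> a \<le> b \<Longrightarrow> C b - C a \<le> c a * (b - a)"
  using C_split[of a b] integral_le[OF c_integrable integrable_const_ivl, of a b "c a"]
  by (simp add: c_antimono mult.commute)

lemma C_mono: "0 \<le> a \<Longrightarrow> a \<le> b \<Longrightarrow> C a \<le> C b"
  using C_split[of a b] integral_nonneg[OF c_integrable, of a b] by (simp add: c_nonneg)

lemma C_continuous: "continuous_on {0..} C"
  unfolding C_def[abs_def] by (intro indefinite_integral_continuous_atLeast c_integrable) simp

lemma radius_nonneg: "0 \<le> t \<Longrightarrow> 0 \<le> radius t"
  by (simp add: radius_def arclength_nonneg)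

lemma norm_le_radius: "0 \<le> t \<Longrightarrow> norm (x t) \<le> radius t"
  using norm_triangle_sub[of "x t" "x 0"] displacement_le_arclength[of 0 t]
  by (simp add: radius_def arclength_def)

lemma rate_within_ball: "0 \<le> \<rho> \<Longrightarrow> norm (x t) \<le> \<rho> \<Longrightarrow> c \<rho> * sqrt (L (x t)) \<le> speed t"
  using c_bound[of \<rho> "x t"] L_nonneg[of "x t"]
  by (cases "L (x t) = 0") (simp_all add: speed_def pos_le_divide_eq)

lemma lyapunov_bound:
  assumes "0 \<le> t"
  shows "C (radius t) + 2 * sqrt (L (x t)) \<le> C (norm (x 0)) + 2 * sqrt (L (x 0))"
proof -
  have "C (norm (x 0) + arclength t) + 2 * sqrt (L (x t))
      \<le> C (norm (x 0) + arclength 0) + 2 * sqrt (L (x 0))"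
  proof (rule lyapunov_decreasing[where \<phi> = c])
    show "continuous_on {norm (x 0)..} C" by (rule continuous_on_subset[OF C_continuous]) auto
    show "C b - C a \<le> c a * (b - a)" if "norm (x 0) \<le> a" "a \<le> b" for a b
      using C_increment_le that norm_ge_zero order_trans by blast
    show "0 \<le> c a" if "norm (x 0) \<le> a" for a
      using c_nonneg that norm_ge_zero order_trans by blast
    show "c (norm (x 0) + arclength u) * sqrt (L (x u)) \<le> speed u" if "0 \<le> u" for u
      using rate_within_ball[OF radius_nonneg[OF that] norm_le_radius[OF that]] by (simp add: radius_def)
  qed (use assms in auto)
  then show ?thesis by (simp add: radius_def arclength_def)
qed

lemma radius_gap:
  assumes "0 < R" and below: "C (norm (x 0)) + 2 * sqrt (L (x 0)) < C R" and "0 \<le> t"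
  shows "radius t < R"
    and "C R - (C (norm (x 0)) + 2 * sqrt (L (x 0))) \<le> c (radius t) * (R - radius t)"
proof -
  have bound: "C (radius t) \<le> C (norm (x 0)) + 2 * sqrt (L (x 0))"
    using lyapunov_bound[OF \<open>0 \<le> t\<close>] real_sqrt_ge_zero[OF L_nonneg[of "x t"]] by linarith
  show "radius t < R"
  proof (rule ccontr)
    assume "\<not> radius t < R"
    then have "C R \<le> C (radius t)" using C_mono[of R "radius t"] \<open>0 < R\<close> by simp
    then show False using bound below by simp
  qed
  then have "C R - C (radius t) \<le> c (radius t) * (R - radius t)"
    using C_increment_le radius_nonneg[OF \<open>0 \<le> t\<close>] by simp
  then show "C R - (C (norm (x 0)) + 2 * sqrt (L (x 0))) \<le> c (radius t) * (R - radius t)"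
    using bound by simp
qed

lemma confinement:
  assumes "0 < R" and below: "C (norm (x 0)) + 2 * sqrt (L (x 0)) < C R"
  obtains \<rho> \<delta> where "\<rho> < R" "0 < \<delta>" "\<And>t. 0 \<le> t \<Longrightarrow> norm (x t) \<le> \<rho>"
    "\<And>t. 0 \<le> t \<Longrightarrow> \<delta> * sqrt (L (x t)) \<le> speed t"
proof -
  define \<eta> where "\<eta> = C R - (C (norm (x 0)) + 2 * sqrt (L (x 0)))"
  have "0 < \<eta>" using below by (simp add: \<eta>_def)
  note gap = radius_gap[OF assms, folded \<eta>_def]
  have c0: "0 < c 0"
  proof -
    have "0 < c (radius 0) * (R - radius 0)" using gap(2)[of 0] \<open>0 < \<eta>\<close> by simp
    then have "0 < c (radius 0)" using gap(1)[of 0] by (simp add: zero_less_mult_iff)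
    then show ?thesis using c_antimono[OF order_refl radius_nonneg[of 0]] by simp
  qed
  \<comment> \<open>Since \<open>c (radius t) \<le> c 0\<close> and \<open>R - radius t \<le> R\<close>, the bound
    \<open>\<eta> \<le> c (radius t) * (R - radius t)\<close> keeps both factors uniformly away from 0.\<close>
  show thesis
  proof (rule that[of "R - \<eta> / c 0" "\<eta> / R"])
    show "R - \<eta> / c 0 < R" "0 < \<eta> / R" using \<open>0 < \<eta>\<close> c0 \<open>0 < R\<close> by simp_all
  next
    fix t :: real assume "0 \<le> t"
    have "c (radius t) \<le> c 0" "0 \<le> c (radius t)"
      using c_antimono[OF order_refl] c_nonneg radius_nonneg[OF \<open>0 \<le> t\<close>] by auto
    then have "\<eta> \<le> c 0 * (R - radius t)" "\<eta> \<le> c (radius t) * R"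
      using gap[OF \<open>0 \<le> t\<close>] radius_nonneg[OF \<open>0 \<le> t\<close>]
      by (smt (verit) mult_left_mono mult_right_mono)+
    then have "\<eta> / c 0 \<le> R - radius t" and c_ge: "\<eta> / R \<le> c (radius t)"
      using c0 \<open>0 < R\<close> by (simp_all add: pos_divide_le_eq mult.commute)
    then show "norm (x t) \<le> R - \<eta> / c 0" using norm_le_radius[OF \<open>0 \<le> t\<close>] by simp
    show "\<eta> / R * sqrt (L (x t)) \<le> speed t"
      using order_trans[OF mult_right_mono[OF c_ge real_sqrt_ge_zero[OF L_nonneg]]
          rate_within_ball[OF radius_nonneg[OF \<open>0 \<le> t\<close>] norm_le_radius[OF \<open>0 \<le> t\<close>]]] .
  qed
qed

end

theorem proposition2p2:
  fixes L :: "'a::{real_inner, complete_space} \<Rightarrow> real"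
    and G :: "'a \<Rightarrow> 'a"
    and G' :: "'a \<Rightarrow> ('a \<Rightarrow>\<^sub>L 'a)"
    and c :: "real \<Rightarrow> real"
    and x :: "real \<Rightarrow> 'a"
    and x0 :: 'a
  assumes L_nonneg: "\<And>y. L y \<ge> 0"
    and L_grad: "\<And>y. (L has_derivative (\<lambda>h. inner (G y) h)) (at y)"
    and G_deriv: "\<And>y. (G has_derivative blinfun_apply (G' y)) (at y)"
    and G'_cont: "continuous_on UNIV G'"
    and c_nonneg: "\<And>r. r \<ge> 0 \<Longrightarrow> c r \<ge> 0"
    and c_antimono: "\<And>r s. 0 \<le> r \<Longrightarrow> r \<le> s \<Longrightarrow> c s \<le> c r"
    and c_bound: "\<And>r y. r \<ge> 0 \<Longrightarrow> norm y \<le> r \<Longrightarrow> L y \<noteq> 0 \<Longrightarrow>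
                    c r \<le> norm (G y) / sqrt (L y)"
    and ode: "\<And>t. t \<ge> 0 \<Longrightarrow> (x has_vector_derivative - G (x t)) (at t within {0..})"
    and init: "x 0 = x0"
  shows "(\<forall>t\<ge>0.
            integral {0..norm x0 + integral {0..t} (\<lambda>s. norm (vector_derivative x (at s within {0..})))} c
              + 2 * sqrt (L (x t))
            \<le> integral {0..norm x0} c + 2 * sqrt (L x0))
         \<and> (\<forall>R>0. integral {0..R} c > integral {0..norm x0} c + 2 * sqrt (L x0) \<longrightarrow>
              (\<exists>xinf. norm xinf < R \<and> L xinf = 0 \<and> (x \<longlongrightarrow> xinf) at_top \<and>
                 (\<forall>t\<ge>0. L (x t) \<le> L x0 * exp (- (c R)\<^sup>2 * t) \<and>
                         c R * dist (x t) xinf \<le> 2 * sqrt (L x0) * exp (- (c R)\<^sup>2 * t / 2))))"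
proof -
  have G_cont: "continuous_on UNIV G"
    by (intro continuous_at_imp_continuous_on ballI has_derivative_continuous[OF G_deriv])
  interpret lojasiewicz_flow L G x c
    by unfold_locales (fact L_nonneg L_grad G_cont ode c_nonneg c_antimono c_bound)+
  show ?thesis
  proof (intro conjI allI impI)
    fix t :: real assume "0 \<le> t"
    then show "integral {0..norm x0 + integral {0..t} (\<lambda>s. norm (vector_derivative x (at s within {0..})))} c
        + 2 * sqrt (L (x t)) \<le> integral {0..norm x0} c + 2 * sqrt (L x0)"
      using lyapunov_bound by (simp add: arclength_eq_integral_norm_vector_derivative C_def radius_def init)
  next
    fix R :: real assume "0 < R" "integral {0..norm x0} c + 2 * sqrt (L x0) < integral {0..R} c"
    then obtain \<rho> \<delta> where "\<rho> < R" "0 < \<delta>" and in_ball: "\<And>t. 0 \<le> t \<Longrightarrow> norm (x t) \<le> \<rho>"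
      and rate_\<delta>: "\<And>t. 0 \<le> t \<Longrightarrow> \<delta> * sqrt (L (x t)) \<le> speed t"
      using confinement by (auto simp: C_def init)
    have rate_R: "c R * sqrt (L (x t)) \<le> speed t" if "0 \<le> t" for t
      using rate_within_ball[of R t] in_ball[OF that] \<open>\<rho> < R\<close> \<open>0 < R\<close> by simp
    obtain l where lim: "(x \<longlongrightarrow> l) at_top" and "L l = 0"
      by (rule converges_to_minimizer[OF \<open>0 < \<delta>\<close> rate_\<delta>])
    have "\<forall>\<^sub>F t in at_top. norm (x t) \<le> \<rho>"
      using eventually_ge_at_top[of 0] by eventually_elim (rule in_ball)
    then have "norm l \<le> \<rho>" using tendsto_norm[OF lim] by (simp add: tendsto_upperbound)
    then show "\<exists>xinf. norm xinf < R \<and> L xinf = 0 \<and> (x \<longlongrightarrow> xinf) at_top \<and>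
        (\<forall>t\<ge>0. L (x t) \<le> L x0 * exp (- (c R)\<^sup>2 * t) \<and>
                c R * dist (x t) xinf \<le> 2 * sqrt (L x0) * exp (- (c R)\<^sup>2 * t / 2))"
      using \<open>\<rho> < R\<close> \<open>L l = 0\<close> lim energy_decay[OF _ rate_R] dist_limit_bound[OF _ rate_R lim]
        c_nonneg[of R] \<open>0 < R\<close>
      by (intro exI[of _ l]) (auto simp: init)
  qed
qed

end
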